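(* Let $\rho_{Q^n}$ be an arbitrary normalized state on $Q^{\otimes n}$ and let $\{P,I-P\}$ be a two-outcome POVM on $Q$ with $\|P\|_\infty\le\delta$. Let $\boldsymbol N_P$ be the number of $P$-outcomes when each subsystem of $\rho_{Q^n}$ is measured with $\{P,I-P\}$. Then $$\Pr\Big(\frac{\boldsymbol N_P}{n}\ge\delta+c\Big)\le\sum_{i=n(\delta+c)}^{n}\binom ni\delta^i(1-\delta)^{n-i}$$ (sum over integers $i$ with $n(\delta+c)\le i\le n$). *)

theory Defs
  imports Complex_Main
begin

text \<open>Q is a Hilbert space of dimension d (basis indices 0..<d).  Q^{\<otimes>n} has the
  product basis indexed by lists of length n with entries < d.  Operators are
  represented by their matrix entries w.r.t. these bases.\<close>

definition idx :: "nat \<Rightarrow> nat \<Rightarrow> nat list set" where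
  "idx d n = {xs. length xs = n \<and> set xs \<subseteq> {..<d}}"

definition psd_on :: "'i set \<Rightarrow> ('i \<Rightarrow> 'i \<Rightarrow> complex) \<Rightarrow> bool" where
  "psd_on S A \<longleftrightarrow> (\<forall>v :: 'i \<Rightarrow> complex.
      Im (\<Sum>i\<in>S. \<Sum>j\<in>S. cnj (v i) * A i j * v j) = 0 \<and>
      0 \<le> Re (\<Sum>i\<in>S. \<Sum>j\<in>S. cnj (v i) * A i j * v j))"

definition density_op :: "'i set \<Rightarrow> ('i \<Rightarrow> 'i \<Rightarrow> complex) \<Rightarrow> bool" where
  "density_op S \<rho> \<longleftrightarrow> psd_on S \<rho> \<and> (\<Sum>i\<in>S. \<rho> i i) = 1"

definition id_op :: "nat \<Rightarrow> nat \<Rightarrow> complex" where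
  "id_op i j = (if i = j then 1 else 0)"

definition two_povm :: "nat \<Rightarrow> (nat \<Rightarrow> nat \<Rightarrow> complex) \<Rightarrow> bool" where
  "two_povm d P \<longleftrightarrow> psd_on {..<d} P \<and> psd_on {..<d} (\<lambda>i j. id_op i j - P i j)"

definition vec_norm :: "nat \<Rightarrow> (nat \<Rightarrow> complex) \<Rightarrow> real" where
  "vec_norm d v = sqrt (\<Sum>i<d. (cmod (v i))\<^sup>2)"

definition mat_app :: "nat \<Rightarrow> (nat \<Rightarrow> nat \<Rightarrow> complex) \<Rightarrow> (nat \<Rightarrow> complex) \<Rightarrow> nat \<Rightarrow> complex" where
  "mat_app d A v = (\<lambda>i. \<Sum>j<d. A i j * v j)"

definition op_norm :: "nat \<Rightarrow> (nat \<Rightarrow> nat \<Rightarrow> complex) \<Rightarrow> real" where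
  "op_norm d A = Sup {vec_norm d (mat_app d A v) | v. vec_norm d v = 1}"

definition outcome_op :: "(nat \<Rightarrow> nat \<Rightarrow> complex) \<Rightarrow> bool \<Rightarrow> nat \<Rightarrow> nat \<Rightarrow> complex" where
  "outcome_op P b = (if b then P else (\<lambda>i j. id_op i j - P i j))"

text \<open>Probability of outcome string x (length n) when each subsystem is measured:
  tr(\<rho> (M_{x_1} \<otimes> ... \<otimes> M_{x_n})).\<close>
definition outcome_prob :: "nat \<Rightarrow> nat \<Rightarrow> (nat list \<Rightarrow> nat list \<Rightarrow> complex)
    \<Rightarrow> (nat \<Rightarrow> nat \<Rightarrow> complex) \<Rightarrow> bool list \<Rightarrow> real" where
  "outcome_prob d n \<rho> P x =
     Re (\<Sum>i\<in>idx d n. \<Sum>j\<in>idx d n.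
           \<rho> i j * (\<Prod>k<n. outcome_op P (x ! k) (j ! k) (i ! k)))"

definition outcome_strings :: "nat \<Rightarrow> bool list set" where
  "outcome_strings n = {x. length x = n}"

definition num_P :: "bool list \<Rightarrow> nat" where
  "num_P x = length (filter id x)"

definition prob_event :: "nat \<Rightarrow> nat \<Rightarrow> (nat list \<Rightarrow> nat list \<Rightarrow> complex)
    \<Rightarrow> (nat \<Rightarrow> nat \<Rightarrow> complex) \<Rightarrow> (bool list \<Rightarrow> bool) \<Rightarrow> real" where
  "prob_event d n \<rho> P E = (\<Sum>x\<in>{x \<in> outcome_strings n. E x}. outcome_prob d n \<rho> P x)"

end

theory Submission
  imports Defs "HOL-Analysis.L2_Norm"
begin

text \<open>Measuring the first system with \<open>{P, I - P}\<close> leaves the other \<open>n - 1\<close> systems in the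
  unnormalised states \<open>tr\<^sub>1((P \<otimes> I) \<rho>)\<close> and \<open>tr\<^sub>1(((I - P) \<otimes> I) \<rho>)\<close>. Both are positive
  semidefinite (the trace of a product of two positive semidefinite matrices is nonnegative, as one
  of them is a sum of rank-one terms \<open>u u\<^sup>*\<close>), their traces add up to \<open>tr \<rho>\<close>, and since
  \<open>P \<le> \<delta> I\<close> the first one has trace \<open>x \<le> \<delta> tr \<rho>\<close>. The binomial tail
  \<open>B\<^sub>n(t) = Pr[Bin(n, \<delta>) \<ge> t]\<close> is antitone in \<open>t\<close> and satisfies
  \<open>B\<^sub>n\<^sub>+\<^sub>1(t) = \<delta> B\<^sub>n(t - 1) + (1 - \<delta>) B\<^sub>n(t)\<close>. By induction on \<open>n\<close>,
  \<open>Pr[N\<^sub>P \<ge> t] \<le> x B\<^sub>n(t - 1) + (tr \<rho> - x) B\<^sub>n(t)\<close>, and raising the weight \<open>x\<close> of the larger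
  value \<open>B\<^sub>n(t - 1)\<close> to \<open>\<delta> tr \<rho>\<close> gives \<open>tr \<rho> B\<^sub>n\<^sub>+\<^sub>1(t)\<close>.\<close>

section \<open>Positive semidefinite matrices\<close>

definition quad_form :: "'i set \<Rightarrow> ('i \<Rightarrow> 'i \<Rightarrow> complex) \<Rightarrow> ('i \<Rightarrow> complex) \<Rightarrow> complex" where
  "quad_form S A v = (\<Sum>i\<in>S. \<Sum>j\<in>S. cnj (v i) * A i j * v j)"

lemma psd_on_iff_quad_form:
  "psd_on S A \<longleftrightarrow> (\<forall>v. Im (quad_form S A v) = 0 \<and> 0 \<le> Re (quad_form S A v))"
  unfolding psd_on_def quad_form_def by simp

lemma psd_onD:
  assumes "psd_on S A"
  shows "Im (quad_form S A v) = 0" "0 \<le> Re (quad_form S A v)"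
  using assms unfolding psd_on_iff_quad_form by auto

lemma quad_form_cong: "(\<And>k. k \<in> S \<Longrightarrow> v k = w k) \<Longrightarrow> quad_form S A v = quad_form S A w"
  unfolding quad_form_def by (intro sum.cong refl) auto

lemma psd_on_cong:
  "(\<And>i j. i \<in> S \<Longrightarrow> j \<in> S \<Longrightarrow> A i j = B i j) \<Longrightarrow> psd_on S A = psd_on S B"
  unfolding psd_on_def by (metis (no_types, lifting) sum.cong)

lemma quad_form_mono_neutral:
  assumes "finite S" "T \<subseteq> S" "\<And>k. k \<in> S - T \<Longrightarrow> v k = 0"
  shows "quad_form S A v = quad_form T A v"
proof -
  have "quad_form S A v = (\<Sum>i\<in>T. \<Sum>j\<in>S. cnj (v i) * A i j * v j)"
    unfolding quad_form_def by (rule sum.mono_neutral_right) (use assms in auto)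
  also have "\<dots> = quad_form T A v"
    unfolding quad_form_def
    by (intro sum.cong refl sum.mono_neutral_right) (use assms in auto)
  finally show ?thesis .
qed

lemma quad_form_two_points:
  assumes "finite S" "i \<in> S" "j \<in> S" "i \<noteq> j"
  shows "quad_form S A (\<lambda>k. if k = i then a else if k = j then b else 0)
    = cnj a * A i i * a + cnj a * A i j * b + cnj b * A j i * a + cnj b * A j j * b"
  using assms by (subst quad_form_mono_neutral[where T = "{i, j}"]) (auto simp: quad_form_def)

lemma quad_form_one_point:
  assumes "finite S" "i \<in> S"
  shows "quad_form S A (\<lambda>k. if k = i then a else 0) = cnj a * A i i * a"
  using assms by (subst quad_form_mono_neutral[where T = "{i}"]) (auto simp: quad_form_def)

lemma psd_on_diag:
  assumes "psd_on S A" "finite S" "i \<in> S"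
  shows "Im (A i i) = 0" "0 \<le> Re (A i i)"
  using psd_onD[OF assms(1), of "\<lambda>k. if k = i then 1 else 0"]
  by (simp_all add: quad_form_one_point[OF assms(2,3)])

lemma psd_on_diag_eq_Re:
  assumes "psd_on S A" "finite S" "i \<in> S"
  shows "A i i = complex_of_real (Re (A i i))"
  using psd_on_diag(1)[OF assms] by (simp add: complex_eq_iff)

lemma psd_on_hermitian:
  assumes "psd_on S A" "finite S" "i \<in> S" "j \<in> S"
  shows "A j i = cnj (A i j)"
proof (cases "i = j")
  case True
  then show ?thesis using psd_on_diag[OF assms(1-3)] by (simp add: complex_eq_iff)
next
  case False
  have diag: "Im (A i i) = 0" "Im (A j j) = 0"
    using psd_on_diag(1)[OF assms(1,2)] assms(3,4) by auto
  have "Im (A i j) + Im (A j i) = 0"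
    using psd_onD(1)[OF assms(1), of "\<lambda>k. if k = i then 1 else if k = j then 1 else 0"] diag
    by (simp add: quad_form_two_points[OF assms(2-4) False])
  moreover have "Re (A i j) - Re (A j i) = 0"
    using psd_onD(1)[OF assms(1), of "\<lambda>k. if k = i then 1 else if k = j then \<i> else 0"] diag
    by (simp add: quad_form_two_points[OF assms(2-4) False])
  ultimately show ?thesis by (simp add: complex_eq_iff)
qed

lemma psd_on_zero_diag_row:
  assumes "psd_on S A" "finite S" "i \<in> S" "j \<in> S" "A i i = 0"
  shows "A i j = 0"
proof (rule ccontr)
  assume nz: "A i j \<noteq> 0"
  then have "i \<noteq> j" using assms by auto
  define q where "q = (Re (A i j))\<^sup>2 + (Im (A i j))\<^sup>2"
  have q: "q > 0" using nz by (simp add: q_def complex_eq_iff sum_power2_gt_zero_iff)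
  define t where "t = (Re (A j j) + 1) / (2 * q)"
  have "0 \<le> Re (quad_form S A (\<lambda>k. if k = i then - (t * A i j) else if k = j then 1 else 0))"
    by (rule psd_onD[OF assms(1)])
  also have "\<dots> = Re (A j j) - 2 * t * q"
    using assms(5) psd_on_hermitian[OF assms(1-4)]
    by (simp add: quad_form_two_points[OF assms(2-4) \<open>i \<noteq> j\<close>] q_def algebra_simps power2_eq_square)
  also have "\<dots> = -1" using q by (simp add: t_def field_simps)
  finally show False by simp
qed

lemma psd_on_subset:
  assumes "psd_on T A" "S \<subseteq> T" "finite T"
  shows "psd_on S A"
  unfolding psd_on_iff_quad_form
proof
  fix v
  let ?w = "\<lambda>k. if k \<in> S then v k else (0::complex)"
  have "quad_form S A v = quad_form T A ?w"
    using quad_form_mono_neutral[OF assms(3,2), of ?w A] quad_form_cong[of S ?w v A] by auto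
  then show "Im (quad_form S A v) = 0 \<and> 0 \<le> Re (quad_form S A v)"
    using psd_onD[OF assms(1)] by simp
qed

lemma quad_form_add_point:
  assumes "finite S" "s \<in> S"
  shows "quad_form S A (\<lambda>k. v k + (if k = s then \<tau> else 0)) = quad_form S A v
     + \<tau> * (\<Sum>i\<in>S. cnj (v i) * A i s) + cnj \<tau> * (\<Sum>j\<in>S. A s j * v j) + cnj \<tau> * A s s * \<tau>"
proof -
  define e where "e = (\<lambda>k. if k = s then \<tau> else 0)"
  have "quad_form S A (\<lambda>k. v k + e k) = quad_form S A v
      + (\<Sum>i\<in>S. \<Sum>j\<in>S. cnj (v i) * A i j * e j) + (\<Sum>i\<in>S. \<Sum>j\<in>S. cnj (e i) * A i j * v j)
      + (\<Sum>i\<in>S. \<Sum>j\<in>S. cnj (e i) * A i j * e j)"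
    unfolding quad_form_def by (simp add: sum.distrib algebra_simps)
  also have "(\<Sum>i\<in>S. \<Sum>j\<in>S. cnj (v i) * A i j * e j) = \<tau> * (\<Sum>i\<in>S. cnj (v i) * A i s)"
    using assms by (simp add: e_def sum_distrib_left mult_ac if_distrib cong: if_cong)
  also have "(\<Sum>i\<in>S. \<Sum>j\<in>S. cnj (e i) * A i j * v j)
      = (\<Sum>i\<in>S. if i = s then cnj \<tau> * (\<Sum>j\<in>S. A s j * v j) else 0)"
    by (intro sum.cong refl) (simp add: e_def sum_distrib_left mult_ac)
  also have "\<dots> = cnj \<tau> * (\<Sum>j\<in>S. A s j * v j)"
    using assms by simp
  also have "(\<Sum>i\<in>S. \<Sum>j\<in>S. cnj (e i) * A i j * e j)
      = (\<Sum>i\<in>S. if i = s then cnj \<tau> * A s s * \<tau> else 0)"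
    using assms by (intro sum.cong refl) (simp add: e_def if_distrib cong: if_cong)
  also have "\<dots> = cnj \<tau> * A s s * \<tau>"
    using assms by simp
  finally show ?thesis unfolding e_def .
qed

lemma psd_on_schur_complement:
  assumes B: "psd_on S B" and fin: "finite S" and s: "s \<in> S" and pos: "Re (B s s) > 0"
  shows "psd_on S (\<lambda>i j. B i j - B i s * B s j / B s s)"
  unfolding psd_on_iff_quad_form
proof
  fix v
  define \<beta> where "\<beta> = (\<Sum>j\<in>S. B s j * v j)"
  have Bss: "B s s \<noteq> 0" "cnj (B s s) = B s s"
    using pos psd_on_hermitian[OF B fin s s] by auto
  have cnj_\<beta>: "(\<Sum>i\<in>S. cnj (v i) * B i s) = cnj \<beta>"
    unfolding \<beta>_def by (simp add: psd_on_hermitian[OF B fin s] mult.commute)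
  \<comment> \<open>completing the square: the Schur complement form is the form of \<open>B\<close> at a shifted vector\<close>
  have "quad_form S (\<lambda>i j. B i j - B i s * B s j / B s s) v
      = (\<Sum>i\<in>S. \<Sum>j\<in>S. cnj (v i) * B i j * v j - (cnj (v i) * B i s) * (B s j * v j) / B s s)"
    unfolding quad_form_def by (intro sum.cong refl) (simp add: algebra_simps)
  also have "\<dots> = quad_form S B v - cnj \<beta> * \<beta> / B s s"
    unfolding quad_form_def \<beta>_def cnj_\<beta>[symmetric, unfolded \<beta>_def]
    by (simp add: sum_subtractf sum_divide_distrib sum_product)
  also have "\<dots> = quad_form S B (\<lambda>k. v k + (if k = s then - \<beta> / B s s else 0))"
    unfolding quad_form_add_point[OF fin s] cnj_\<beta> \<beta>_def[symmetric]
    using Bss by (simp add: field_simps)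
  finally show "Im (quad_form S (\<lambda>i j. B i j - B i s * B s j / B s s) v) = 0 \<and>
      0 \<le> Re (quad_form S (\<lambda>i j. B i j - B i s * B s j / B s s) v)"
    using psd_onD[OF B] by simp
qed

lemma psd_on_deflate:
  assumes B: "psd_on S B" and fin: "finite S" and s: "s \<in> S"
  obtains b where "psd_on S (\<lambda>i j. B i j - b i * cnj (b j))" "b s * cnj (b s) = B s s"
proof (cases "Re (B s s) = 0")
  case True
  then have "B s s = 0" using psd_on_diag_eq_Re[OF B fin s] by simp
  then show ?thesis using that[of "\<lambda>_. 0"] B by simp
next
  case False
  define r where "r = Re (B s s)"
  have r: "r > 0" using False psd_on_diag(2)[OF B fin s] by (simp add: r_def)
  have Bss: "B s s = r" using psd_on_diag_eq_Re[OF B fin s] by (simp add: r_def)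
  define b where "b i = B i s / sqrt r" for i
  have "b i * cnj (b j) = B i s * B s j / B s s" if "j \<in> S" for i j
  proof -
    have "complex_of_real (sqrt r) * complex_of_real (sqrt r) = r"
      unfolding of_real_mult[symmetric] using r by simp
    then show ?thesis
      using psd_on_hermitian[OF B fin s that] r by (simp add: b_def Bss field_simps)
  qed
  moreover have "psd_on S (\<lambda>i j. B i j - B i s * B s j / B s s)"
    using psd_on_schur_complement[OF B fin s] r by (simp add: r_def)
  ultimately show ?thesis
    using that[of b] psd_on_cong[of S "\<lambda>i j. B i j - b i * cnj (b j)"] s by auto
qed

lemma psd_on_gram:
  assumes "finite S" "psd_on S B"
  shows "\<exists>(m::nat) U. \<forall>i\<in>S. \<forall>j\<in>S. B i j = (\<Sum>k<m. U k i * cnj (U k j))"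
  using assms
proof (induction S arbitrary: B rule: finite_induct)
  case empty
  then show ?case by auto
next
  case (insert s S)
  let ?T = "insert s S"
  have fin: "finite ?T" using insert.hyps by simp
  obtain b where deflated: "psd_on ?T (\<lambda>i j. B i j - b i * cnj (b j))"
    and bs: "b s * cnj (b s) = B s s"
    using psd_on_deflate[OF insert.prems fin] by blast
  define C where "C i j = B i j - b i * cnj (b j)" for i j
  have psd_C: "psd_on ?T C" using deflated by (simp add: C_def[abs_def])
  have C_row_col: "C s j = 0" "C j s = 0" if "j \<in> ?T" for j
    using psd_on_zero_diag_row[OF psd_C fin _ that] psd_on_hermitian[OF psd_C fin _ that] bs
    by (auto simp: C_def)
  obtain m :: nat and U where U: "\<forall>i\<in>S. \<forall>j\<in>S. C i j = (\<Sum>k<m. U k i * cnj (U k j))"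
    using insert.IH[OF psd_on_subset[OF psd_C subset_insertI fin]] by blast
  define V where "V k = (if k = m then b else (\<lambda>i. if i = s then 0 else U k i))" for k
  have "B i j = (\<Sum>k<Suc m. V k i * cnj (V k j))" if "i \<in> ?T" "j \<in> ?T" for i j
  proof -
    have "B i j = C i j + b i * cnj (b j)" by (simp add: C_def)
    also have "C i j = (\<Sum>k<m. V k i * cnj (V k j))"
      using U C_row_col that by (cases "i = s \<or> j = s") (auto simp: V_def)
    finally show ?thesis by (simp add: V_def)
  qed
  then show ?case by blast
qed

lemma psd_on_trace_mult:
  assumes fin: "finite S" and A: "psd_on S A" and B: "psd_on S B"
  shows "Im (\<Sum>i\<in>S. \<Sum>j\<in>S. A i j * B j i) = 0" "0 \<le> Re (\<Sum>i\<in>S. \<Sum>j\<in>S. A i j * B j i)"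
proof -
  obtain m :: nat and U where U: "\<forall>i\<in>S. \<forall>j\<in>S. B i j = (\<Sum>k<m. U k i * cnj (U k j))"
    using psd_on_gram[OF fin B] by blast
  have "(\<Sum>i\<in>S. \<Sum>j\<in>S. A i j * B j i) = (\<Sum>i\<in>S. \<Sum>j\<in>S. \<Sum>k<m. cnj (U k i) * A i j * U k j)"
    using U by (intro sum.cong refl) (simp add: sum_distrib_left mult_ac)
  also have "\<dots> = (\<Sum>k<m. quad_form S A (U k))"
    unfolding quad_form_def by (subst sum.swap) (simp add: sum.swap[of _ S "{..<m}"])
  finally have eq: "(\<Sum>i\<in>S. \<Sum>j\<in>S. A i j * B j i) = (\<Sum>k<m. quad_form S A (U k))" .
  show "Im (\<Sum>i\<in>S. \<Sum>j\<in>S. A i j * B j i) = 0" "0 \<le> Re (\<Sum>i\<in>S. \<Sum>j\<in>S. A i j * B j i)"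
    unfolding eq Im_sum Re_sum using psd_onD[OF A] by (simp_all add: sum_nonneg)
qed

section \<open>The operator norm\<close>

lemma vec_norm_eq_L2_set: "vec_norm d v = L2_set (\<lambda>i. cmod (v i)) {..<d}"
  unfolding vec_norm_def L2_set_def by simp

lemma vec_norm_nonneg: "0 \<le> vec_norm d v"
  by (simp add: vec_norm_eq_L2_set)

lemma vec_norm_scale: "vec_norm d (\<lambda>i. c * v i) = cmod c * vec_norm d v"
  unfolding vec_norm_eq_L2_set norm_mult by (rule L2_set_right_distrib[symmetric]) simp

lemma bdd_above_op_norm: "bdd_above {vec_norm d (mat_app d A v) | v. vec_norm d v = 1}"
proof (rule bdd_aboveI)
  fix x assume "x \<in> {vec_norm d (mat_app d A v) | v. vec_norm d v = 1}"
  then obtain v where v: "vec_norm d v = 1" and x: "x = vec_norm d (mat_app d A v)" by blast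
  have v_le: "cmod (v j) \<le> 1" if "j < d" for j
    using member_le_L2_set[of "{..<d}" j "\<lambda>i. cmod (v i)"] that v
    by (simp add: vec_norm_eq_L2_set)
  have "x \<le> (\<Sum>i<d. cmod (mat_app d A v i))"
    unfolding x vec_norm_eq_L2_set by (rule L2_set_le_sum) simp
  also have "\<dots> \<le> (\<Sum>i<d. \<Sum>j<d. cmod (A i j * v j))"
    unfolding mat_app_def by (intro sum_mono norm_sum)
  also have "\<dots> \<le> (\<Sum>i<d. \<Sum>j<d. cmod (A i j))"
    using v_le by (intro sum_mono) (simp add: norm_mult mult_left_le)
  finally show "x \<le> (\<Sum>i<d. \<Sum>j<d. cmod (A i j))" .
qed

lemma op_norm_nonneg:
  assumes "d \<ge> 1"
  shows "0 \<le> op_norm d A"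
proof -
  let ?e = "\<lambda>i. if i = 0 then 1 else 0 :: complex"
  have "vec_norm d ?e = 1"
    using assms by (simp add: vec_norm_def if_distrib[of "\<lambda>z. (cmod z)\<^sup>2"] cong: if_cong)
  then have "vec_norm d (mat_app d A ?e) \<le> op_norm d A"
    unfolding op_norm_def by (intro cSup_upper[OF _ bdd_above_op_norm]) blast
  then show ?thesis using vec_norm_nonneg order_trans by blast
qed

lemma vec_norm_mat_app_le: "vec_norm d (mat_app d A v) \<le> op_norm d A * vec_norm d v"
proof (cases "vec_norm d v = 0")
  case True
  then have "v i = 0" if "i < d" for i
    using that L2_set_eq_0_iff[of "{..<d}" "\<lambda>i. cmod (v i)"] by (simp add: vec_norm_eq_L2_set)
  then have "vec_norm d (mat_app d A v) = 0"
    by (simp add: vec_norm_def mat_app_def)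
  then show ?thesis using True by simp
next
  case False
  define N where "N = vec_norm d v"
  have N: "N > 0" using False vec_norm_nonneg[of d v] by (simp add: N_def)
  define u where "u = (\<lambda>i. of_real (1 / N) * v i)"
  have "vec_norm d u = cmod (of_real (1 / N)) * N"
    unfolding u_def N_def by (rule vec_norm_scale)
  then have "vec_norm d u = 1"
    using N by (simp add: norm_divide)
  then have "vec_norm d (mat_app d A u) \<le> op_norm d A"
    unfolding op_norm_def by (intro cSup_upper[OF _ bdd_above_op_norm]) blast
  moreover have "mat_app d A u = (\<lambda>i. of_real (1 / N) * mat_app d A v i)"
    by (simp add: mat_app_def u_def sum_distrib_left mult_ac)
  then have "vec_norm d (mat_app d A u) = vec_norm d (mat_app d A v) / N"
    by (simp only: vec_norm_scale) (use N in \<open>simp add: norm_divide\<close>)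
  ultimately show ?thesis
    using N by (simp add: N_def field_simps)
qed

lemma quad_form_le_op_norm: "Re (quad_form {..<d} A v) \<le> op_norm d A * (vec_norm d v)\<^sup>2"
proof -
  have "quad_form {..<d} A v = (\<Sum>i<d. cnj (v i) * mat_app d A v i)"
    by (simp add: quad_form_def mat_app_def sum_distrib_left mult.assoc)
  then have "Re (quad_form {..<d} A v) \<le> cmod (\<Sum>i<d. cnj (v i) * mat_app d A v i)"
    by (metis complex_Re_le_cmod)
  also have "\<dots> \<le> (\<Sum>i<d. cmod (v i) * cmod (mat_app d A v i))"
    by (rule order_trans[OF norm_sum]) (simp add: norm_mult)
  also have "\<dots> \<le> vec_norm d v * vec_norm d (mat_app d A v)"
    using L2_set_mult_ineq[of "\<lambda>i. cmod (v i)" "\<lambda>i. cmod (mat_app d A v i)" "{..<d}"]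
    by (simp add: vec_norm_eq_L2_set)
  also have "\<dots> \<le> vec_norm d v * (op_norm d A * vec_norm d v)"
    by (intro mult_left_mono vec_norm_mat_app_le vec_norm_nonneg)
  finally show ?thesis by (simp add: power2_eq_square mult_ac)
qed

lemma quad_form_id_op: "quad_form {..<d} id_op v = (vec_norm d v)\<^sup>2"
proof -
  have "(\<Sum>j<d. cnj (v i) * id_op i j * v j) = (\<Sum>j<d. if j = i then v i * cnj (v i) else 0)"
    for i by (intro sum.cong) (auto simp: id_op_def)
  then have "quad_form {..<d} id_op v = (\<Sum>i<d. v i * cnj (v i))"
    by (simp add: quad_form_def)
  also have "\<dots> = (\<Sum>i<d. complex_of_real ((cmod (v i))\<^sup>2))"
    by (simp only: complex_norm_square)
  finally show ?thesis by (simp add: vec_norm_def sum_nonneg)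
qed

lemma psd_on_op_norm_bound:
  assumes P: "psd_on {..<d} P" and norm: "op_norm d P \<le> \<delta>"
  shows "psd_on {..<d} (\<lambda>i j. \<delta> * id_op i j - P i j)"
  unfolding psd_on_iff_quad_form
proof
  fix v
  have "quad_form {..<d} (\<lambda>i j. \<delta> * id_op i j - P i j) v
      = \<delta> * quad_form {..<d} id_op v - quad_form {..<d} P v"
    by (simp add: quad_form_def algebra_simps sum_subtractf sum_distrib_left)
  also have "\<dots> = \<delta> * (vec_norm d v)\<^sup>2 - quad_form {..<d} P v"
    by (simp add: quad_form_id_op)
  finally have eq: "quad_form {..<d} (\<lambda>i j. \<delta> * id_op i j - P i j) v
      = \<delta> * (vec_norm d v)\<^sup>2 - quad_form {..<d} P v" .
  have "Re (quad_form {..<d} P v) \<le> \<delta> * (vec_norm d v)\<^sup>2"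
    using quad_form_le_op_norm[of d P v] mult_right_mono[OF norm, of "(vec_norm d v)\<^sup>2"] by simp
  then show "Im (quad_form {..<d} (\<lambda>i j. \<delta> * id_op i j - P i j) v) = 0 \<and>
      0 \<le> Re (quad_form {..<d} (\<lambda>i j. \<delta> * id_op i j - P i j) v)"
    unfolding eq using psd_onD(1)[OF P, of v] by simp
qed

section \<open>Measuring the first system\<close>

lemma finite_idx: "finite (idx d n)"
  using finite_lists_length_eq[of "{..<d}" n] by (simp add: idx_def conj_commute)

lemma idx_Suc: "idx d (Suc n) = (\<lambda>(a, l). a # l) ` ({..<d} \<times> idx d n)"
  by (auto simp: idx_def length_Suc_conv image_iff)

lemma sum_idx_Suc: "(\<Sum>l\<in>idx d (Suc n). f l) = (\<Sum>a<d. \<Sum>i\<in>idx d n. f (a # i))"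
proof -
  have "inj_on (\<lambda>(a, l). a # l) ({..<d} \<times> idx d n)"
    by (auto simp: inj_on_def)
  then show ?thesis
    by (simp add: idx_Suc sum.reindex sum.cartesian_product prod.case_distrib)
qed

lemma sum_swap_pairs:
  "(\<Sum>i\<in>I. \<Sum>j\<in>J. \<Sum>a\<in>A. \<Sum>b\<in>B. f i j a b) = (\<Sum>a\<in>A. \<Sum>b\<in>B. \<Sum>i\<in>I. \<Sum>j\<in>J. f i j a b)"
proof -
  have "(\<Sum>i\<in>I. \<Sum>j\<in>J. \<Sum>a\<in>A. \<Sum>b\<in>B. f i j a b) = (\<Sum>i\<in>I. \<Sum>a\<in>A. \<Sum>j\<in>J. \<Sum>b\<in>B. f i j a b)"
    by (intro sum.cong refl) (rule sum.swap)
  also have "\<dots> = (\<Sum>a\<in>A. \<Sum>i\<in>I. \<Sum>b\<in>B. \<Sum>j\<in>J. f i j a b)"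
    by (subst sum.swap) (intro sum.cong refl sum.swap)
  also have "\<dots> = (\<Sum>a\<in>A. \<Sum>b\<in>B. \<Sum>i\<in>I. \<Sum>j\<in>J. f i j a b)"
    by (intro sum.cong refl) (rule sum.swap)
  finally show ?thesis .
qed

text \<open>\<open>reduce_first d \<rho> M\<close> is \<open>tr\<^sub>1((M \<otimes> I) \<rho>)\<close>, the unnormalised state in which the remaining
  systems are left after outcome \<open>M\<close> on the first one; \<open>compress_rest d n \<rho> v\<close> is
  \<open>(I \<otimes> v\<^sup>*) \<rho> (I \<otimes> v)\<close>, an operator on the first system.\<close>

definition reduce_first ::
    "nat \<Rightarrow> (nat list \<Rightarrow> nat list \<Rightarrow> complex) \<Rightarrow> (nat \<Rightarrow> nat \<Rightarrow> complex) \<Rightarrow> nat list \<Rightarrow> nat list \<Rightarrow> complex"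
  where "reduce_first d \<rho> M i j = (\<Sum>a<d. \<Sum>a'<d. \<rho> (a # i) (a' # j) * M a' a)"

definition compress_rest ::
    "nat \<Rightarrow> nat \<Rightarrow> (nat list \<Rightarrow> nat list \<Rightarrow> complex) \<Rightarrow> (nat list \<Rightarrow> complex) \<Rightarrow> nat \<Rightarrow> nat \<Rightarrow> complex"
  where "compress_rest d n \<rho> v a a' = (\<Sum>i\<in>idx d n. \<Sum>j\<in>idx d n. cnj (v i) * \<rho> (a # i) (a' # j) * v j)"

lemma quad_form_compress_rest:
  "quad_form {..<d} (compress_rest d n \<rho> v) w = quad_form (idx d (Suc n)) \<rho> (\<lambda>l. w (hd l) * v (tl l))"
proof -
  have "quad_form (idx d (Suc n)) \<rho> (\<lambda>l. w (hd l) * v (tl l))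
      = (\<Sum>a<d. \<Sum>i\<in>idx d n. \<Sum>a'<d. \<Sum>j\<in>idx d n. cnj (w a) * (cnj (v i) * \<rho> (a # i) (a' # j) * v j) * w a')"
    by (simp add: quad_form_def sum_idx_Suc mult_ac)
  also have "\<dots> = (\<Sum>a<d. \<Sum>a'<d. \<Sum>i\<in>idx d n. \<Sum>j\<in>idx d n. cnj (w a) * (cnj (v i) * \<rho> (a # i) (a' # j) * v j) * w a')"
    by (intro sum.cong refl) (rule sum.swap)
  also have "\<dots> = quad_form {..<d} (compress_rest d n \<rho> v) w"
    by (simp add: quad_form_def compress_rest_def sum_distrib_left sum_distrib_right)
  finally show ?thesis ..
qed

lemma psd_on_compress_rest:
  assumes "psd_on (idx d (Suc n)) \<rho>"
  shows "psd_on {..<d} (compress_rest d n \<rho> v)"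
  using psd_onD[OF assms] by (simp add: psd_on_iff_quad_form quad_form_compress_rest)

lemma quad_form_reduce_first:
  "quad_form (idx d n) (reduce_first d \<rho> M) v = (\<Sum>a<d. \<Sum>a'<d. compress_rest d n \<rho> v a a' * M a' a)"
proof -
  have "quad_form (idx d n) (reduce_first d \<rho> M) v
      = (\<Sum>i\<in>idx d n. \<Sum>j\<in>idx d n. \<Sum>a<d. \<Sum>a'<d. cnj (v i) * \<rho> (a # i) (a' # j) * v j * M a' a)"
    by (simp add: quad_form_def reduce_first_def sum_distrib_left sum_distrib_right mult_ac)
  also have "\<dots> = (\<Sum>a<d. \<Sum>a'<d. \<Sum>i\<in>idx d n. \<Sum>j\<in>idx d n. cnj (v i) * \<rho> (a # i) (a' # j) * v j * M a' a)"
    by (rule sum_swap_pairs)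
  finally show ?thesis
    by (simp add: compress_rest_def sum_distrib_right)
qed

lemma psd_on_reduce_first:
  assumes "psd_on (idx d (Suc n)) \<rho>" "psd_on {..<d} M"
  shows "psd_on (idx d n) (reduce_first d \<rho> M)"
  using psd_on_trace_mult[OF _ psd_on_compress_rest[OF assms(1)] assms(2)]
  by (simp add: psd_on_iff_quad_form quad_form_reduce_first)

lemma trace_reduce_first_nonneg:
  assumes "psd_on (idx d (Suc n)) \<rho>" "psd_on {..<d} M"
  shows "0 \<le> Re (\<Sum>i\<in>idx d n. reduce_first d \<rho> M i i)"
  using psd_on_diag(2)[OF psd_on_reduce_first[OF assms] finite_idx]
  by (simp add: sum_nonneg)

lemma reduce_first_diff:
  "reduce_first d \<rho> (\<lambda>a a'. A a a' - B a a') i j = reduce_first d \<rho> A i j - reduce_first d \<rho> B i j"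
  by (simp add: reduce_first_def algebra_simps sum_subtractf)

lemma reduce_first_scale:
  "reduce_first d \<rho> (\<lambda>a a'. c * A a a') i j = c * reduce_first d \<rho> A i j"
  by (simp add: reduce_first_def sum_distrib_left mult_ac)

lemma trace_reduce_first_id_op:
  "(\<Sum>i\<in>idx d n. reduce_first d \<rho> id_op i i) = (\<Sum>l\<in>idx d (Suc n). \<rho> l l)"
proof -
  have "reduce_first d \<rho> id_op i i = (\<Sum>a<d. \<rho> (a # i) (a # i))" for i
    by (simp add: reduce_first_def id_op_def if_distrib cong: if_cong)
  then show ?thesis
    by (simp add: sum_idx_Suc sum.swap[of _ "idx d n"])
qed

lemma outcome_prob_Cons:
  "outcome_prob d (Suc n) \<rho> P (b # y) = outcome_prob d n (reduce_first d \<rho> (outcome_op P b)) P y"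
proof -
  let ?M = "\<lambda>i j. \<Prod>k<n. outcome_op P (y ! k) (j ! k) (i ! k)"
  have "(\<Sum>l\<in>idx d (Suc n). \<Sum>m\<in>idx d (Suc n). \<rho> l m * (\<Prod>k<Suc n. outcome_op P ((b # y) ! k) (m ! k) (l ! k)))
     = (\<Sum>a<d. \<Sum>i\<in>idx d n. \<Sum>a'<d. \<Sum>j\<in>idx d n. \<rho> (a # i) (a' # j) * (outcome_op P b a' a * ?M i j))"
    unfolding sum_idx_Suc prod.lessThan_Suc_shift by simp
  also have "\<dots> = (\<Sum>a<d. \<Sum>a'<d. \<Sum>i\<in>idx d n. \<Sum>j\<in>idx d n. \<rho> (a # i) (a' # j) * (outcome_op P b a' a * ?M i j))"
    by (intro sum.cong refl) (rule sum.swap)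
  also have "\<dots> = (\<Sum>i\<in>idx d n. \<Sum>j\<in>idx d n. reduce_first d \<rho> (outcome_op P b) i j * ?M i j)"
    by (subst sum_swap_pairs) (simp add: reduce_first_def sum_distrib_right mult.assoc)
  finally show ?thesis by (simp add: outcome_prob_def)
qed

section \<open>The binomial tail\<close>

definition binomial_tail :: "real \<Rightarrow> nat \<Rightarrow> real \<Rightarrow> real" where
  "binomial_tail \<delta> n t = (\<Sum>i\<in>{i. i \<le> n \<and> t \<le> real i}. real (n choose i) * \<delta> ^ i * (1 - \<delta>) ^ (n - i))"

lemma binomial_tail_altdef:
  "binomial_tail \<delta> n t = (\<Sum>i\<le>n. if t \<le> real i then real (n choose i) * \<delta> ^ i * (1 - \<delta>) ^ (n - i) else 0)"
proof -
  have "{i. i \<le> n \<and> t \<le> real i} = {i \<in> {..n}. t \<le> real i}" by auto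
  then show ?thesis
    unfolding binomial_tail_def by (simp only:) (rule sum.inter_filter, simp)
qed

lemma binomial_tail_0: "binomial_tail \<delta> 0 t = (if t \<le> 0 then 1 else 0)"
  by (simp add: binomial_tail_altdef)

lemma binomial_tail_antimono:
  assumes "0 \<le> \<delta>" "\<delta> \<le> 1" "s \<le> t"
  shows "binomial_tail \<delta> n t \<le> binomial_tail \<delta> n s"
  unfolding binomial_tail_def using assms by (intro sum_mono2) auto

lemma binomial_term_Suc_Suc:
  fixes \<delta> :: real
  shows "real (Suc n choose Suc i) * \<delta> ^ Suc i * (1 - \<delta>) ^ (Suc n - Suc i)
    = \<delta> * (real (n choose i) * \<delta> ^ i * (1 - \<delta>) ^ (n - i))
      + (1 - \<delta>) * (real (n choose Suc i) * \<delta> ^ Suc i * (1 - \<delta>) ^ (n - Suc i))"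
proof (cases "i < n")
  case True
  then have "n - i = Suc (n - Suc i)" by simp
  then show ?thesis by (simp add: algebra_simps)
next
  case False
  then have "n choose Suc i = 0" by simp
  then show ?thesis by (simp add: algebra_simps)
qed

lemma binomial_tail_Suc:
  "binomial_tail \<delta> (Suc n) t = \<delta> * binomial_tail \<delta> n (t - 1) + (1 - \<delta>) * binomial_tail \<delta> n t"
proof -
  define b where "b m i = real (m choose i) * \<delta> ^ i * (1 - \<delta>) ^ (m - i)" for m i
  have "binomial_tail \<delta> (Suc n) t = (\<Sum>i\<le>Suc n. if t \<le> real i then b (Suc n) i else 0)"
    by (simp only: binomial_tail_altdef b_def)
  also have "\<dots> = (if t \<le> 0 then b (Suc n) 0 else 0)
      + (\<Sum>i\<le>n. if t \<le> real (Suc i) then b (Suc n) (Suc i) else 0)"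
    by (subst sum.atMost_Suc_shift) simp
  also have "\<dots> = (1 - \<delta>) * (if t \<le> 0 then b n 0 else 0)
      + (\<Sum>i\<le>n. \<delta> * (if t - 1 \<le> real i then b n i else 0)
          + (1 - \<delta>) * (if t \<le> real (Suc i) then b n (Suc i) else 0))"
    unfolding b_def binomial_term_Suc_Suc by (auto intro!: sum.cong)
  also have "\<dots> = \<delta> * (\<Sum>i\<le>n. if t - 1 \<le> real i then b n i else 0)
      + (1 - \<delta>) * (\<Sum>i\<le>Suc n. if t \<le> real i then b n i else 0)"
    unfolding sum.distrib sum_distrib_left[symmetric] by (subst sum.atMost_Suc_shift) (simp add: algebra_simps)
  also have "(\<Sum>i\<le>Suc n. if t \<le> real i then b n i else 0) = (\<Sum>i\<le>n. if t \<le> real i then b n i else 0)"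
    by (simp add: b_def)
  also have "\<delta> * (\<Sum>i\<le>n. if t - 1 \<le> real i then b n i else 0)
      + (1 - \<delta>) * (\<Sum>i\<le>n. if t \<le> real i then b n i else 0)
      = \<delta> * binomial_tail \<delta> n (t - 1) + (1 - \<delta>) * binomial_tail \<delta> n t"
    by (simp only: binomial_tail_altdef b_def)
  finally show ?thesis .
qed

section \<open>The tail bound\<close>

lemma finite_outcome_strings: "finite (outcome_strings n)"
  using finite_lists_length_eq[of "UNIV :: bool set" n] by (simp add: outcome_strings_def)

lemma outcome_strings_Suc_threshold:
  "{x \<in> outcome_strings (Suc n). t \<le> real (num_P x)}
   = Cons True ` {y \<in> outcome_strings n. t - 1 \<le> real (num_P y)}
     \<union> Cons False ` {y \<in> outcome_strings n. t \<le> real (num_P y)}"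
  by (auto simp: outcome_strings_def num_P_def length_Suc_conv image_iff split: if_splits)

lemma prob_event_Suc:
  "prob_event d (Suc n) \<rho> P (\<lambda>x. t \<le> real (num_P x))
    = prob_event d n (reduce_first d \<rho> (outcome_op P True)) P (\<lambda>y. t - 1 \<le> real (num_P y))
      + prob_event d n (reduce_first d \<rho> (outcome_op P False)) P (\<lambda>y. t \<le> real (num_P y))"
  unfolding prob_event_def outcome_strings_Suc_threshold
  by (subst sum.union_disjoint) (auto simp: finite_outcome_strings sum.reindex outcome_prob_Cons)

lemma prob_event_num_P_le_binomial_tail:
  assumes povm: "two_povm d P" and bound: "psd_on {..<d} (\<lambda>i j. \<delta> * id_op i j - P i j)"
    and "0 \<le> \<delta>" "\<delta> \<le> 1" and "psd_on (idx d n) \<rho>"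
  shows "prob_event d n \<rho> P (\<lambda>x. t \<le> real (num_P x))
    \<le> Re (\<Sum>l\<in>idx d n. \<rho> l l) * binomial_tail \<delta> n t"
  using assms(5)
proof (induction n arbitrary: \<rho> t)
  case 0
  have "outcome_strings 0 = {[]}" by (simp add: outcome_strings_def)
  then show ?case
    by (simp add: prob_event_def outcome_prob_def idx_def binomial_tail_0 num_P_def Collect_conv_if)
next
  case (Suc n)
  define \<sigma>T where "\<sigma>T = reduce_first d \<rho> (outcome_op P True)"
  define \<sigma>F where "\<sigma>F = reduce_first d \<rho> (outcome_op P False)"
  define T where "T = Re (\<Sum>l\<in>idx d (Suc n). \<rho> l l)"
  define x where "x = Re (\<Sum>i\<in>idx d n. \<sigma>T i i)"
  have "psd_on (idx d n) \<sigma>T" "psd_on (idx d n) \<sigma>F"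
    using povm psd_on_reduce_first[OF Suc.prems]
    by (simp_all add: \<sigma>T_def \<sigma>F_def outcome_op_def two_povm_def)
  note IH = Suc.IH[OF this(1)] Suc.IH[OF this(2)]
  have trace_\<sigma>F: "Re (\<Sum>i\<in>idx d n. \<sigma>F i i) = T - x"
    by (simp add: \<sigma>F_def \<sigma>T_def outcome_op_def reduce_first_diff sum_subtractf
        trace_reduce_first_id_op T_def x_def)
  have "0 \<le> Re (\<Sum>i\<in>idx d n. reduce_first d \<rho> (\<lambda>i j. \<delta> * id_op i j - P i j) i i)"
    by (rule trace_reduce_first_nonneg[OF Suc.prems bound])
  then have x_le: "x \<le> \<delta> * T"
    by (simp add: reduce_first_diff reduce_first_scale sum_subtractf sum_distrib_left[symmetric]
        trace_reduce_first_id_op \<sigma>T_def outcome_op_def T_def x_def)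
  have "prob_event d (Suc n) \<rho> P (\<lambda>x. t \<le> real (num_P x))
      = prob_event d n \<sigma>T P (\<lambda>y. t - 1 \<le> real (num_P y)) + prob_event d n \<sigma>F P (\<lambda>y. t \<le> real (num_P y))"
    by (simp add: prob_event_Suc \<sigma>T_def \<sigma>F_def)
  also have "\<dots> \<le> x * binomial_tail \<delta> n (t - 1) + (T - x) * binomial_tail \<delta> n t"
    unfolding trace_\<sigma>F[symmetric] unfolding x_def by (intro add_mono IH)
  also have "\<dots> = T * binomial_tail \<delta> n t + x * (binomial_tail \<delta> n (t - 1) - binomial_tail \<delta> n t)"
    by (simp add: algebra_simps)
  also have "\<dots> \<le> T * binomial_tail \<delta> n t + (\<delta> * T) * (binomial_tail \<delta> n (t - 1) - binomial_tail \<delta> n t)"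
    using x_le binomial_tail_antimono[OF assms(3,4), of "t - 1" t n]
    by (intro add_left_mono mult_right_mono) auto
  also have "\<dots> = T * binomial_tail \<delta> (Suc n) t"
    by (simp add: binomial_tail_Suc algebra_simps)
  finally show ?case by (simp add: T_def)
qed

theorem lemma4:
  fixes d n :: nat and \<rho> :: "nat list \<Rightarrow> nat list \<Rightarrow> complex"
    and P :: "nat \<Rightarrow> nat \<Rightarrow> complex" and \<delta> c :: real
  assumes "d \<ge> 1" and "n \<ge> 1"
    and "density_op (idx d n) \<rho>"
    and "two_povm d P"
    and "op_norm d P \<le> \<delta>" and "\<delta> \<le> 1"
  shows "prob_event d n \<rho> P (\<lambda>x. real (num_P x) / real n \<ge> \<delta> + c)
    \<le> (\<Sum>i\<in>{i. i \<le> n \<and> real n * (\<delta> + c) \<le> real i}.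
          real (n choose i) * \<delta> ^ i * (1 - \<delta>) ^ (n - i))"
proof -
  have \<rho>: "psd_on (idx d n) \<rho>" and trace: "(\<Sum>i\<in>idx d n. \<rho> i i) = 1"
    using assms(3) by (auto simp: density_op_def)
  have bound: "psd_on {..<d} (\<lambda>i j. \<delta> * id_op i j - P i j)"
    using psd_on_op_norm_bound assms(4,5) by (auto simp: two_povm_def)
  have "0 \<le> \<delta>"
    using op_norm_nonneg[OF assms(1), of P] assms(5) by linarith
  have event: "(\<lambda>x. real (num_P x) / real n \<ge> \<delta> + c) = (\<lambda>x. real n * (\<delta> + c) \<le> real (num_P x))"
    using assms(2) by (auto simp: field_simps)
  have "prob_event d n \<rho> P (\<lambda>x. real n * (\<delta> + c) \<le> real (num_P x))
      \<le> binomial_tail \<delta> n (real n * (\<delta> + c))"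
    using prob_event_num_P_le_binomial_tail[OF assms(4) bound \<open>0 \<le> \<delta>\<close> assms(6) \<rho>]
    by (simp add: trace)
  then show ?thesis
    by (simp only: event binomial_tail_def)
qed

end
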